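(* Let $m,k\ge1$, $N=m+k$, $\alpha>0$, let $\Phi$ be a Minkowski norm on $\mathbb{R}^m$ and $\Psi$ a Minkowski norm on $\mathbb{R}^k$, with $\Phi^0$ the dual norm of $\Phi$. Suppose that, for some $A>0$, there exists a function $K>0$ on $\mathbb{R}^N$ satisfying $$2(\alpha+1)K\,\mathscr L_{\Phi,\Psi,\alpha}(K)=(m+(\alpha+1)k+2\alpha)\left[\Phi(\nabla_z K)^2+\frac{\Phi^0(z)^{2\alpha}}{4}\Psi(\nabla_\sigma K)^2\right]+A\,K^{\frac{2\alpha}{\alpha+1}}.$$ Then the function $\rho>0$ defined by $K=\rho^{2(\alpha+1)}$ solves $$\mathscr L_{\Phi,\Psi,\alpha}\big(\rho^{-(m+(\alpha+1)k-2)}\big)=-\lambda\,\rho^{-(m+(\alpha+1)k+2)}\qquad\text{with }\lambda=\frac{A(m+(\alpha+1)k-2)}{4(\alpha+1)^2}.$$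
   Context: Points of $\mathbb{R}^N=\mathbb{R}^m\times\mathbb{R}^k$ are written $(z,\sigma)$. A Minkowski norm on $\mathbb{R}^n$ is a function $M:\mathbb{R}^n\to[0,\infty)$ such that $M^2\in C^2(\mathbb{R}^n\setminus\{0\})$ is strictly convex and $M(\lambda x)=|\lambda|M(x)$ for all $x$, $\lambda\in\mathbb{R}$; its dual norm is $M^0(x)=\sup_{M(\xi)=1}\langle x,\xi\rangle$. The Finsler Laplacians are $\Delta_\Phi(v)=\operatorname{div}_z(\Phi(\nabla_z v)\nabla\Phi(\nabla_z v))$ and $\Delta_\Psi(v)=\operatorname{div}_\sigma(\Psi(\nabla_\sigma v)\nabla\Psi(\nabla_\sigma v))$, and $\mathscr L_{\Phi,\Psi,\alpha}(v)=\Delta_\Phi(v)+\frac{\Phi^0(z)^{2\alpha}}{4}\Delta_\Psi(v)$. *)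

theory Defs
  imports "HOL-Analysis.Analysis"
begin

definition grad :: "('a::euclidean_space \<Rightarrow> real) \<Rightarrow> 'a \<Rightarrow> 'a" where
  "grad f x = (THE D. GDERIV f x :> D)"

definition minkowski_norm :: "('a::euclidean_space \<Rightarrow> real) \<Rightarrow> bool" where
  "minkowski_norm M \<longleftrightarrow>
     (\<forall>x. 0 \<le> M x) \<and>
     (\<forall>x (l::real). M (l *\<^sub>R x) = \<bar>l\<bar> * M x) \<and>
     (\<exists>g H. (\<forall>x. x \<noteq> 0 \<longrightarrow> GDERIV (\<lambda>y. (M y)\<^sup>2) x :> g x) \<and>
            (\<forall>x. x \<noteq> 0 \<longrightarrow> (g has_derivative H x) (at x)) \<and>
            (\<forall>v. continuous_on (- {0}) (\<lambda>x. H x v))) \<and>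
     (\<forall>x y (t::real). x \<noteq> y \<longrightarrow> 0 < t \<longrightarrow> t < 1 \<longrightarrow>
        (M ((1 - t) *\<^sub>R x + t *\<^sub>R y))\<^sup>2 < (1 - t) * (M x)\<^sup>2 + t * (M y)\<^sup>2)"

definition dual_norm :: "('a::euclidean_space \<Rightarrow> real) \<Rightarrow> 'a \<Rightarrow> real" where
  "dual_norm M x = Sup ((\<lambda>\<xi>. x \<bullet> \<xi>) ` {\<xi>. M \<xi> = 1})"

definition flux :: "('a::euclidean_space \<Rightarrow> real) \<Rightarrow> 'a \<Rightarrow> 'a" where
  "flux M \<xi> = (if \<xi> = 0 then 0 else M \<xi> *\<^sub>R grad M \<xi>)"

definition grad_z :: "('m::euclidean_space \<times> 'k::euclidean_space \<Rightarrow> real) \<Rightarrow> 'm \<times> 'k \<Rightarrow> 'm" where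
  "grad_z v p = grad (\<lambda>z. v (z, snd p)) (fst p)"

definition grad_s :: "('m::euclidean_space \<times> 'k::euclidean_space \<Rightarrow> real) \<Rightarrow> 'm \<times> 'k \<Rightarrow> 'k" where
  "grad_s v p = grad (\<lambda>s. v (fst p, s)) (snd p)"

definition div_z :: "('m::euclidean_space \<times> 'k::euclidean_space \<Rightarrow> 'm) \<Rightarrow> 'm \<times> 'k \<Rightarrow> real" where
  "div_z V p = (\<Sum>b\<in>Basis. frechet_derivative (\<lambda>z. V (z, snd p) \<bullet> b) (at (fst p)) b)"

definition div_s :: "('m::euclidean_space \<times> 'k::euclidean_space \<Rightarrow> 'k) \<Rightarrow> 'm \<times> 'k \<Rightarrow> real" where
  "div_s V p = (\<Sum>b\<in>Basis. frechet_derivative (\<lambda>s. V (fst p, s) \<bullet> b) (at (snd p)) b)"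

definition finsler_lap_z :: "('m::euclidean_space \<Rightarrow> real) \<Rightarrow> ('m \<times> 'k::euclidean_space \<Rightarrow> real) \<Rightarrow> 'm \<times> 'k \<Rightarrow> real" where
  "finsler_lap_z Phi v = div_z (\<lambda>q. flux Phi (grad_z v q))"

definition finsler_lap_s :: "('k::euclidean_space \<Rightarrow> real) \<Rightarrow> ('m::euclidean_space \<times> 'k \<Rightarrow> real) \<Rightarrow> 'm \<times> 'k \<Rightarrow> real" where
  "finsler_lap_s Psi v = div_s (\<lambda>q. flux Psi (grad_s v q))"

definition opL :: "('m::euclidean_space \<Rightarrow> real) \<Rightarrow> ('k::euclidean_space \<Rightarrow> real) \<Rightarrow> real
                    \<Rightarrow> ('m \<times> 'k \<Rightarrow> real) \<Rightarrow> 'm \<times> 'k \<Rightarrow> real" where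
  "opL Phi Psi \<alpha> v p = finsler_lap_z Phi v p
      + (dual_norm Phi (fst p)) powr (2 * \<alpha>) / 4 * finsler_lap_s Psi v p"

end

(* Write \<rho>^-(Q-2) = K^\<beta> with \<beta> = -(Q-2)/(2(\<alpha>+1)). Because the flux
   \<xi> \<mapsto> M(\<xi>) \<nabla>M(\<xi>) of a Minkowski norm is odd and 1-homogeneous, with \<xi> \<bullet> flux = M(\<xi>)^2,
   the operator obeys the chain rule
     L(g \<circ> K) = g''(K) [\<Phi>(\<nabla>_z K)^2 + \<Phi>^0(z)^(2\<alpha>)/4 \<Psi>(\<nabla>_\<sigma> K)^2] + g'(K) L(K).
   For g(t) = t^\<beta> we have \<beta> - 1 = -(Q+2\<alpha>)/(2(\<alpha>+1)), so substituting the equation for K L(K)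
   cancels the gradient terms exactly and leaves only the multiple of A K^(2\<alpha>/(\<alpha>+1)). *)

theory Submission
  imports Defs
begin

lemma gderiv_unique:
  assumes "GDERIV f x :> D" and "GDERIV f x :> D'"
  shows "D = D'"
proof -
  have "(\<lambda>h. h \<bullet> D) = (\<lambda>h. h \<bullet> D')"
    using assms unfolding gderiv_def by (rule has_derivative_unique)
  then have "(D - D') \<bullet> (D - D') = 0"
    by (metis inner_diff_right right_minus_eq)
  then show ?thesis by simp
qed

lemma grad_eqI: "GDERIV f x :> D \<Longrightarrow> grad f x = D"
  unfolding grad_def using gderiv_unique by blast

lemma gderiv_grad:
  fixes f :: "'a::euclidean_space \<Rightarrow> real"
  assumes "f differentiable (at x)"
  shows "GDERIV f x :> grad f x"
proof -
  obtain f' where f': "(f has_derivative f') (at x)"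
    using assms by (auto simp: differentiable_def)
  have "f' = (\<lambda>h. h \<bullet> adjoint f' 1)"
    using adjoint_works[OF has_derivative_linear[OF f'], of _ 1] by auto
  then have "GDERIV f x :> adjoint f' 1"
    using f' unfolding gderiv_def by simp
  then show ?thesis by (simp add: grad_eqI)
qed

lemma grad_comp:
  fixes f :: "'a::euclidean_space \<Rightarrow> real"
  assumes "f differentiable (at x)" and "DERIV g (f x) :> g'"
  shows "grad (\<lambda>y. g (f y)) x = g' *\<^sub>R grad f x"
  by (rule grad_eqI, rule GDERIV_DERIV_compose[OF gderiv_grad[OF assms(1)] assms(2)])

lemma differentiable_comp_real:
  assumes "v differentiable (at x)" and "DERIV g (v x) :> g'"
  shows "(\<lambda>y. g (v y)) differentiable (at x)"
proof -
  have "g differentiable (at (v x))"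
    using assms(2) by (auto simp: differentiable_def has_field_derivative_def)
  then show ?thesis
    using differentiable_chain_at[OF assms(1)] by (simp add: o_def)
qed

definition divergence :: "('a::euclidean_space \<Rightarrow> 'a) \<Rightarrow> 'a \<Rightarrow> real" where
  "divergence W x = (\<Sum>b\<in>Basis. frechet_derivative (\<lambda>y. W y \<bullet> b) (at x) b)"

lemma divergence_scaleR:
  fixes f :: "'a::euclidean_space \<Rightarrow> real" and W :: "'a \<Rightarrow> 'a"
  assumes f: "f differentiable (at x)" and W: "W differentiable (at x)"
  shows "divergence (\<lambda>y. f y *\<^sub>R W y) x = grad f x \<bullet> W x + f x * divergence W x"
proof -
  obtain W' where W': "(W has_derivative W') (at x)"
    using W by (auto simp: differentiable_def)
  have f': "(f has_derivative (\<lambda>h. h \<bullet> grad f x)) (at x)"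
    using gderiv_grad[OF f] unfolding gderiv_def .
  have "frechet_derivative (\<lambda>y. W y \<bullet> b) (at x) = (\<lambda>h. W' h \<bullet> b)" for b
    by (rule frechet_derivative_at[symmetric], rule has_derivative_inner_left[OF W'])
  then have div_W: "divergence W x = (\<Sum>b\<in>Basis. W' b \<bullet> b)"
    by (simp add: divergence_def)
  have "frechet_derivative (\<lambda>y. (f y *\<^sub>R W y) \<bullet> b) (at x)
      = (\<lambda>h. f x * (W' h \<bullet> b) + (h \<bullet> grad f x) * (W x \<bullet> b))" for b
    unfolding inner_scaleR_left
    by (rule frechet_derivative_at[symmetric],
        rule has_derivative_mult[OF f' has_derivative_inner_left[OF W']])
  then have "divergence (\<lambda>y. f y *\<^sub>R W y) x
      = (\<Sum>b\<in>Basis. f x * (W' b \<bullet> b) + (b \<bullet> grad f x) * (W x \<bullet> b))"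
    unfolding divergence_def by simp
  also have "\<dots> = f x * (\<Sum>b\<in>Basis. W' b \<bullet> b) + (\<Sum>b\<in>Basis. (grad f x \<bullet> b) * (W x \<bullet> b))"
    by (simp only: sum.distrib sum_distrib_left inner_commute[of _ "grad f x"])
  finally show ?thesis
    using euclidean_inner[of "grad f x" "W x"] div_W by simp
qed

lemma differentiable_at_fst_slice:
  fixes f :: "'a::real_normed_vector \<times> 'b::real_normed_vector \<Rightarrow> 'c::real_normed_vector"
  assumes "f differentiable (at p)"
  shows "(\<lambda>z. f (z, snd p)) differentiable (at (fst p))"
proof -
  have "(\<lambda>z. (z, snd p)) differentiable (at (fst p))"
    by (rule differentiableI, rule has_derivative_Pair[OF has_derivative_ident has_derivative_const])
  then show ?thesis
    using differentiable_chain_at[of "\<lambda>z. (z, snd p)" "fst p" f] assms by (simp add: o_def)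
qed

lemma differentiable_at_snd_slice:
  fixes f :: "'a::real_normed_vector \<times> 'b::real_normed_vector \<Rightarrow> 'c::real_normed_vector"
  assumes "f differentiable (at p)"
  shows "(\<lambda>s. f (fst p, s)) differentiable (at (snd p))"
proof -
  have "(\<lambda>s. (fst p, s)) differentiable (at (snd p))"
    by (rule differentiableI, rule has_derivative_Pair[OF has_derivative_const has_derivative_ident])
  then show ?thesis
    using differentiable_chain_at[of "\<lambda>s. (fst p, s)" "snd p" f] assms by (simp add: o_def)
qed

lemma grad_z_comp:
  assumes "v differentiable (at p)" and "DERIV g (v p) :> g'"
  shows "grad_z (\<lambda>q. g (v q)) p = g' *\<^sub>R grad_z v p"
  unfolding grad_z_def using assms by (intro grad_comp differentiable_at_fst_slice) simp_all

lemma grad_s_comp: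
  assumes "v differentiable (at p)" and "DERIV g (v p) :> g'"
  shows "grad_s (\<lambda>q. g (v q)) p = g' *\<^sub>R grad_s v p"
  unfolding grad_s_def using assms by (intro grad_comp differentiable_at_snd_slice) simp_all

lemma div_z_scaleR:
  assumes "f differentiable (at p)" and "W differentiable (at p)"
  shows "div_z (\<lambda>q. f q *\<^sub>R W q) p = grad_z f p \<bullet> W p + f p * div_z W p"
  using divergence_scaleR[OF assms[THEN differentiable_at_fst_slice]]
  by (simp add: div_z_def grad_z_def divergence_def)

lemma div_s_scaleR:
  assumes "f differentiable (at p)" and "W differentiable (at p)"
  shows "div_s (\<lambda>q. f q *\<^sub>R W q) p = grad_s f p \<bullet> W p + f p * div_s W p"
  using divergence_scaleR[OF assms[THEN differentiable_at_snd_slice]]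
  by (simp add: div_s_def grad_s_def divergence_def)

lemma minkowski_norm_nonneg: "minkowski_norm M \<Longrightarrow> 0 \<le> M x"
  unfolding minkowski_norm_def by blast

lemma minkowski_norm_scaleR: "minkowski_norm M \<Longrightarrow> M (c *\<^sub>R x) = \<bar>c\<bar> * M x"
  unfolding minkowski_norm_def by blast

lemma minkowski_norm_zero: "minkowski_norm M \<Longrightarrow> M 0 = 0"
  using minkowski_norm_scaleR[of M 0 0] by simp

lemma minkowski_norm_minus: "minkowski_norm M \<Longrightarrow> M (- x) = M x"
  using minkowski_norm_scaleR[of M "-1" x] by simp

text \<open>Positivity is not an axiom: it comes from strict convexity of \<open>M\<^sup>2\<close> on the segment
  from \<open>x\<close> to \<open>-x\<close>, whose midpoint is \<open>0\<close>.\<close>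
lemma minkowski_norm_pos:
  assumes M: "minkowski_norm M" and "x \<noteq> 0"
  shows "0 < M x"
proof -
  have convex: "\<And>y z t. y \<noteq> z \<Longrightarrow> 0 < t \<Longrightarrow> t < 1 \<Longrightarrow>
      (M ((1 - t) *\<^sub>R y + t *\<^sub>R z))\<^sup>2 < (1 - t) * (M y)\<^sup>2 + t * (M z)\<^sup>2"
    using M unfolding minkowski_norm_def by blast
  have "x \<noteq> - x"
    using \<open>x \<noteq> 0\<close> by (metis eq_neg_iff_add_eq_0 scaleR_2 scaleR_eq_0_iff zero_neq_numeral)
  then have "(M ((1 - 1/2) *\<^sub>R x + (1/2::real) *\<^sub>R (- x)))\<^sup>2
      < (1 - 1/2) * (M x)\<^sup>2 + 1/2 * (M (- x))\<^sup>2"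
    by (rule convex) simp_all
  then have "0 < (M x)\<^sup>2"
    by (simp add: minkowski_norm_zero[OF M] minkowski_norm_minus[OF M])
  then show ?thesis
    using minkowski_norm_nonneg[OF M, of x] by (simp add: less_le)
qed

lemma minkowski_norm_gderiv:
  assumes M: "minkowski_norm M" and x: "x \<noteq> 0"
  shows "GDERIV M x :> grad M x"
proof -
  obtain g where g: "GDERIV (\<lambda>y. (M y)\<^sup>2) x :> g"
    using M x unfolding minkowski_norm_def by blast
  have "DERIV sqrt ((M x)\<^sup>2) :> inverse (sqrt ((M x)\<^sup>2)) / 2"
    using minkowski_norm_pos[OF M x] by (intro DERIV_real_sqrt) simp
  from GDERIV_DERIV_compose[OF g this]
  have "GDERIV M x :> (inverse (sqrt ((M x)\<^sup>2)) / 2) *\<^sub>R g"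
    by (simp add: minkowski_norm_nonneg[OF M])
  then show ?thesis by (simp add: grad_eqI)
qed

lemma minkowski_norm_grad_scaleR:
  assumes M: "minkowski_norm M" and x: "x \<noteq> 0" and c: "c \<noteq> 0"
  shows "grad M (c *\<^sub>R x) = sgn c *\<^sub>R grad M x"
proof -
  have "GDERIV (\<lambda>y. M (c *\<^sub>R y)) x :> c *\<^sub>R grad M (c *\<^sub>R x)"
    using has_derivative_compose[OF has_derivative_scaleR_right[OF has_derivative_ident]
        minkowski_norm_gderiv[OF M, of "c *\<^sub>R x", unfolded gderiv_def]] x c
    unfolding gderiv_def by (simp add: mult.commute)
  moreover have "GDERIV (\<lambda>y. M (c *\<^sub>R y)) x :> \<bar>c\<bar> *\<^sub>R grad M x"
    using has_derivative_mult_right[OF minkowski_norm_gderiv[OF M x, unfolded gderiv_def], of "\<bar>c\<bar>"]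
    unfolding gderiv_def minkowski_norm_scaleR[OF M] by simp
  ultimately have "c *\<^sub>R grad M (c *\<^sub>R x) = \<bar>c\<bar> *\<^sub>R grad M x"
    by (rule gderiv_unique)
  then show ?thesis
    using c by (cases "0 < c") (auto simp: sgn_if intro: scaleR_left_imp_eq simp flip: scaleR_minus_right)
qed

lemma minkowski_norm_euler:
  assumes M: "minkowski_norm M" and x: "x \<noteq> 0"
  shows "x \<bullet> grad M x = M x"
proof -
  have "(M has_derivative (\<lambda>h. h \<bullet> grad M x)) (at ((\<lambda>t::real. t *\<^sub>R x) 1))"
    using minkowski_norm_gderiv[OF M x] unfolding gderiv_def by simp
  then have "((\<lambda>t::real. M (t *\<^sub>R x)) has_derivative (\<lambda>s. (s *\<^sub>R x) \<bullet> grad M x)) (at 1)"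
    by (rule has_derivative_compose[OF has_derivative_scaleR_left[OF has_derivative_ident]])
  moreover have "((\<lambda>t::real. M (t *\<^sub>R x)) has_derivative (\<lambda>s. s * M x)) (at 1)"
    by (rule has_derivative_transform_within_open[where s="{0<..}", of "\<lambda>t. t * M x"])
       (auto intro!: derivative_eq_intros simp: minkowski_norm_scaleR[OF M])
  ultimately have "(\<lambda>s. (s *\<^sub>R x) \<bullet> grad M x) = (\<lambda>s::real. s * M x)"
    by (rule has_derivative_unique)
  then show ?thesis by (metis mult_1 scaleR_one)
qed

lemma flux_scaleR:
  assumes "minkowski_norm M"
  shows "flux M (c *\<^sub>R x) = c *\<^sub>R flux M x"
  using minkowski_norm_grad_scaleR[OF assms, of x c]
  by (auto simp: flux_def minkowski_norm_scaleR[OF assms] sgn_if)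

lemma inner_flux:
  assumes "minkowski_norm M"
  shows "x \<bullet> flux M x = (M x)\<^sup>2"
  using minkowski_norm_euler[OF assms, of x]
  by (simp add: flux_def minkowski_norm_zero[OF assms] power2_eq_square)

lemma finsler_lap_z_comp:
  assumes M: "minkowski_norm Phi"
    and v: "\<forall>q. v differentiable (at q)"
    and flux_v: "\<forall>q. (\<lambda>q. flux Phi (grad_z v q)) differentiable (at q)"
    and g: "\<forall>q. DERIV g (v q) :> g' (v q)" and g': "\<forall>q. DERIV g' (v q) :> g'' (v q)"
  shows "finsler_lap_z Phi (\<lambda>q. g (v q)) p
    = g'' (v p) * (Phi (grad_z v p))\<^sup>2 + g' (v p) * finsler_lap_z Phi v p"
proof -
  have flux_comp: "(\<lambda>q. flux Phi (grad_z (\<lambda>q. g (v q)) q))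
      = (\<lambda>q. g' (v q) *\<^sub>R flux Phi (grad_z v q))"
    by (simp add: grad_z_comp[OF v[rule_format] g[rule_format]] flux_scaleR[OF M])
  have "finsler_lap_z Phi (\<lambda>q. g (v q)) p
      = grad_z (\<lambda>q. g' (v q)) p \<bullet> flux Phi (grad_z v p) + g' (v p) * finsler_lap_z Phi v p"
    unfolding finsler_lap_z_def flux_comp
    by (rule div_z_scaleR[OF differentiable_comp_real[OF v[rule_format] g'[rule_format]] flux_v[rule_format]])
  also have "grad_z (\<lambda>q. g' (v q)) p = g'' (v p) *\<^sub>R grad_z v p"
    by (rule grad_z_comp[OF v[rule_format] g'[rule_format]])
  finally show ?thesis
    by (simp add: inner_flux[OF M])
qed

lemma finsler_lap_s_comp:
  assumes M: "minkowski_norm Psi"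
    and v: "\<forall>q. v differentiable (at q)"
    and flux_v: "\<forall>q. (\<lambda>q. flux Psi (grad_s v q)) differentiable (at q)"
    and g: "\<forall>q. DERIV g (v q) :> g' (v q)" and g': "\<forall>q. DERIV g' (v q) :> g'' (v q)"
  shows "finsler_lap_s Psi (\<lambda>q. g (v q)) p
    = g'' (v p) * (Psi (grad_s v p))\<^sup>2 + g' (v p) * finsler_lap_s Psi v p"
proof -
  have flux_comp: "(\<lambda>q. flux Psi (grad_s (\<lambda>q. g (v q)) q))
      = (\<lambda>q. g' (v q) *\<^sub>R flux Psi (grad_s v q))"
    by (simp add: grad_s_comp[OF v[rule_format] g[rule_format]] flux_scaleR[OF M])
  have "finsler_lap_s Psi (\<lambda>q. g (v q)) p
      = grad_s (\<lambda>q. g' (v q)) p \<bullet> flux Psi (grad_s v p) + g' (v p) * finsler_lap_s Psi v p"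
    unfolding finsler_lap_s_def flux_comp
    by (rule div_s_scaleR[OF differentiable_comp_real[OF v[rule_format] g'[rule_format]] flux_v[rule_format]])
  also have "grad_s (\<lambda>q. g' (v q)) p = g'' (v p) *\<^sub>R grad_s v p"
    by (rule grad_s_comp[OF v[rule_format] g'[rule_format]])
  finally show ?thesis
    by (simp add: inner_flux[OF M])
qed

lemma opL_comp:
  assumes "minkowski_norm Phi" and "minkowski_norm Psi"
    and "\<forall>q. v differentiable (at q)"
    and "\<forall>q. (\<lambda>q. flux Phi (grad_z v q)) differentiable (at q)"
    and "\<forall>q. (\<lambda>q. flux Psi (grad_s v q)) differentiable (at q)"
    and "\<forall>q. DERIV g (v q) :> g' (v q)" and "\<forall>q. DERIV g' (v q) :> g'' (v q)"
  shows "opL Phi Psi \<alpha> (\<lambda>q. g (v q)) p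
    = g'' (v p) * ((Phi (grad_z v p))\<^sup>2
                   + dual_norm Phi (fst p) powr (2 * \<alpha>) / 4 * (Psi (grad_s v p))\<^sup>2)
      + g' (v p) * opL Phi Psi \<alpha> v p"
  using finsler_lap_z_comp[OF assms(1,3,4,6,7)] finsler_lap_s_comp[OF assms(2,3,5,6,7)]
  by (simp add: opL_def algebra_simps)

lemma power_substitution_arith:
  fixes \<alpha> A Q k S L :: real
  assumes \<alpha>: "0 < \<alpha>" and k: "0 < k"
    and eq: "2 * (\<alpha> + 1) * k * L = (Q + 2 * \<alpha>) * S + A * k powr (2 * \<alpha> / (\<alpha> + 1))"
    and \<beta>: "\<beta> = - (Q - 2) / (2 * (\<alpha> + 1))"
  shows "\<beta> * (\<beta> - 1) * k powr (\<beta> - 2) * S + \<beta> * k powr (\<beta> - 1) * L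
    = - (A * (Q - 2) / (4 * (\<alpha> + 1)\<^sup>2)) * (k powr (1 / (2 * (\<alpha> + 1)))) powr (- (Q + 2))"
proof -
  have \<alpha>1: "\<alpha> + 1 \<noteq> 0"
    using \<alpha> by simp
  have "k powr (\<beta> - 1) = k powr (\<beta> - 2) * k"
    using powr_add[of k "\<beta> - 2" 1] k by simp
  then have "\<beta> * (\<beta> - 1) * k powr (\<beta> - 2) * S + \<beta> * k powr (\<beta> - 1) * L
      = \<beta> * k powr (\<beta> - 2) * ((\<beta> - 1) * S + k * L)"
    by (simp add: algebra_simps)
  also have "(\<beta> - 1) * S + k * L = A * k powr (2 * \<alpha> / (\<alpha> + 1)) / (2 * (\<alpha> + 1))"
    using \<alpha>1 eq unfolding \<beta> by (simp add: field_simps)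
  also have "\<beta> * k powr (\<beta> - 2) * (A * k powr (2 * \<alpha> / (\<alpha> + 1)) / (2 * (\<alpha> + 1)))
      = \<beta> * A / (2 * (\<alpha> + 1)) * k powr (\<beta> - 2 + 2 * \<alpha> / (\<alpha> + 1))"
    by (simp add: powr_add)
  also have "\<beta> - 2 + 2 * \<alpha> / (\<alpha> + 1) = 1 / (2 * (\<alpha> + 1)) * (- (Q + 2))"
    using \<alpha>1 unfolding \<beta> by (simp add: divide_simps) (simp add: algebra_simps)
  also have "\<beta> * A / (2 * (\<alpha> + 1)) = - (A * (Q - 2) / (4 * (\<alpha> + 1)\<^sup>2))"
    using \<alpha>1 unfolding \<beta> by (simp add: divide_simps power2_eq_square) (simp add: algebra_simps)
  finally show ?thesis
    by (simp add: powr_powr)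
qed

theorem proposition2p3:
  fixes Phi :: "'m::euclidean_space \<Rightarrow> real"
    and Psi :: "'k::euclidean_space \<Rightarrow> real"
    and K :: "'m \<times> 'k \<Rightarrow> real"
    and \<alpha> A :: real
  assumes alpha_pos: "\<alpha> > 0"
    and Phi: "minkowski_norm Phi"
    and Psi: "minkowski_norm Psi"
    and A_pos: "A > 0"
    and K_pos: "\<forall>p. K p > 0"
    and K_diff: "\<forall>p. K differentiable (at p)"
    and flux_z_diff: "\<forall>p. (\<lambda>q. flux Phi (grad_z K q)) differentiable (at p)"
    and flux_s_diff: "\<forall>p. (\<lambda>q. flux Psi (grad_s K q)) differentiable (at p)"
    and eq: "\<forall>p. 2 * (\<alpha> + 1) * K p * opL Phi Psi \<alpha> K p =
               (real DIM('m) + (\<alpha> + 1) * real DIM('k) + 2 * \<alpha>) *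
                 ((Phi (grad_z K p))\<^sup>2
                  + (dual_norm Phi (fst p)) powr (2 * \<alpha>) / 4 * (Psi (grad_s K p))\<^sup>2)
               + A * (K p) powr (2 * \<alpha> / (\<alpha> + 1))"
  shows "let Q = real DIM('m) + (\<alpha> + 1) * real DIM('k);
             \<rho> = (\<lambda>p. (K p) powr (1 / (2 * (\<alpha> + 1))));
             lam = A * (Q - 2) / (4 * (\<alpha> + 1)\<^sup>2)
         in (\<forall>p. \<rho> p > 0 \<and> K p = (\<rho> p) powr (2 * (\<alpha> + 1))) \<and>
            (\<forall>p. opL Phi Psi \<alpha> (\<lambda>q. (\<rho> q) powr (-(Q - 2))) p = - lam * (\<rho> p) powr (-(Q + 2)))"
proof -
  define \<beta> where "\<beta> = - (real DIM('m) + (\<alpha> + 1) * real DIM('k) - 2) / (2 * (\<alpha> + 1))"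
  have K_gt_0: "\<And>p. 0 < K p"
    using K_pos by blast
  have rho_root: "K p powr (1 / (2 * (\<alpha> + 1))) > 0
      \<and> K p = (K p powr (1 / (2 * (\<alpha> + 1)))) powr (2 * (\<alpha> + 1))" for p
    using K_gt_0[of p] alpha_pos by (simp add: powr_powr)
  have rho_power: "(K q powr (1 / (2 * (\<alpha> + 1)))) powr (- (real DIM('m) + (\<alpha> + 1) * real DIM('k) - 2))
      = K q powr \<beta>" for q
    by (simp add: powr_powr \<beta>_def)
  have d1: "\<forall>q. DERIV (\<lambda>t. t powr \<beta>) (K q) :> \<beta> * K q powr (\<beta> - 1)"
    using K_gt_0 by (auto intro!: derivative_eq_intros)
  have d2: "\<forall>q. DERIV (\<lambda>t. \<beta> * t powr (\<beta> - 1)) (K q) :> \<beta> * (\<beta> - 1) * K q powr (\<beta> - 2)"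
    using K_gt_0 by (auto intro!: derivative_eq_intros simp: algebra_simps)
  have "opL Phi Psi \<alpha> (\<lambda>q. K q powr \<beta>) p
      = - (A * (real DIM('m) + (\<alpha> + 1) * real DIM('k) - 2) / (4 * (\<alpha> + 1)\<^sup>2))
        * (K p powr (1 / (2 * (\<alpha> + 1)))) powr (- (real DIM('m) + (\<alpha> + 1) * real DIM('k) + 2))" for p
    using opL_comp[OF Phi Psi K_diff flux_z_diff flux_s_diff d1 d2, of \<alpha> p]
      power_substitution_arith[OF alpha_pos K_gt_0 eq[rule_format] \<beta>_def]
    by simp
  then show ?thesis
    unfolding Let_def using rho_root rho_power by simp
qed

end
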